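(* Let $f_1,\dots,f_m\in\mathbb{R}[x_1,\dots,x_n]$ and $\sigma=(\sigma_1,\dots,\sigma_m)\in\{\le,<,=,>,\ge\}^m$, and set $E_\sigma=\{i:\sigma_i\text{ is }``="\}$. Then for every connected component $C$ of $\{x\in\mathbb{R}^n:f_1(x)\sigma_10,\dots,f_m(x)\sigma_m0\}$, $$Z(C)\subset\bigcup_{E_\sigma\subset S\subset\{1,\dots,m\},\ S\ne\emptyset}\pi_x(W_S).$$
   Context: For nonempty $A\subset\mathbb{R}^n$ with closure $\overline A$ and $\pi_1$ the first coordinate projection: $Z_{\inf}(A)=\{x\in\overline A:x_1=\inf\pi_1(A)\}$ if $\pi_1(A)$ is bounded below (else $\emptyset$), $Z_{\sup}(A)=\{x\in\overline A:x_1=\sup\pi_1(A)\}$ if $\pi_1(A)$ is bounded above (else $\emptyset$), $Z(A)=Z_{\inf}(A)\cup Z_{\sup}(A)$. For $S=\{i_1,\dots,i_s\}\subset\{1,\dots,m\}$: if $s=1$, $W_S=\{z\in\mathbb{C}^n: f_{i_1}(z)=\frac{\partial f_{i_1}}{\partial x_2}(z)=\dots=\frac{\partial f_{i_1}}{\partial x_n}(z)=0\}$; if $2\le s\le n-1$, $W_S\subset\mathbb{C}^n\times\mathbb{P}^{s-1}$ is the set of $(z,(\mu_1:\dots:\mu_s))$ with $f_{i_1}(z)=\dots=f_{i_s}(z)=0$ and $\sum_{j=1}^s\mu_j\frac{\partial f_{i_j}}{\partial x_k}(z)=0$ for $k=2,\dots,n$; if $s\ge n$, $W_S=\{z\in\mathbb{C}^n:f_{i_1}(z)=\dots=f_{i_s}(z)=0\}$.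 $\pi_x$ denotes the projection onto the $x$-coordinates (the identity when $W_S\subset\mathbb{C}^n$), and $\mathbb{R}^n$ is viewed inside $\mathbb{C}^n$. *)

theory Defs
  imports "HOL-Analysis.Analysis"
begin

text \<open>Real polynomials in the variables indexed by the finite type 'n, represented by
their coefficient functions on monomials (exponent vectors 'n => nat) with finite support.\<close>

type_synonym 'n rpoly = "('n \<Rightarrow> nat) \<Rightarrow> real"

definition is_rpoly :: "'n rpoly \<Rightarrow> bool" where
  "is_rpoly p \<longleftrightarrow> finite {\<alpha>. p \<alpha> \<noteq> 0}"

definition peval :: "('n::finite) rpoly \<Rightarrow> 'a::{real_algebra_1,comm_ring_1} ^ 'n \<Rightarrow> 'a" where
  "peval p z = (\<Sum>\<alpha>\<in>{\<alpha>. p \<alpha> \<noteq> 0}. of_real (p \<alpha>) * (\<Prod>i\<in>UNIV. (z $ i) ^ \<alpha> i))"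

definition pdiff :: "'n \<Rightarrow> 'n rpoly \<Rightarrow> 'n rpoly" where
  "pdiff k p = (\<lambda>\<alpha>. of_nat (\<alpha> k + 1) * p (\<alpha>(k := \<alpha> k + 1)))"

definition first_coord :: "'n::wellorder" where
  "first_coord = (LEAST i. True)"

datatype rel = Le | Lt | Eq | Gt | Ge

fun sat :: "rel \<Rightarrow> real \<Rightarrow> bool" where
  "sat Le v = (v \<le> 0)"
| "sat Lt v = (v < 0)"
| "sat Eq v = (v = 0)"
| "sat Gt v = (v > 0)"
| "sat Ge v = (v \<ge> 0)"

definition semialg :: "(nat \<Rightarrow> ('n::finite) rpoly) \<Rightarrow> (nat \<Rightarrow> rel) \<Rightarrow> nat \<Rightarrow> (real ^ 'n) set" where
  "semialg f \<sigma> m = {x. \<forall>i\<in>{1..m}. sat (\<sigma> i) (peval (f i) x)}"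

definition Eset :: "(nat \<Rightarrow> rel) \<Rightarrow> nat \<Rightarrow> nat set" where
  "Eset \<sigma> m = {i\<in>{1..m}. \<sigma> i = Eq}"

definition Zinf :: "(real ^ ('n::{finite,wellorder})) set \<Rightarrow> (real ^ ('n::{finite,wellorder})) set" where
  "Zinf A = (if bdd_below ((\<lambda>x. x $ first_coord) ` A)
             then {x\<in>closure A. x $ first_coord = Inf ((\<lambda>x. x $ first_coord) ` A)} else {})"

definition Zsup :: "(real ^ ('n::{finite,wellorder})) set \<Rightarrow> (real ^ ('n::{finite,wellorder})) set" where
  "Zsup A = (if bdd_above ((\<lambda>x. x $ first_coord) ` A)
             then {x\<in>closure A. x $ first_coord = Sup ((\<lambda>x. x $ first_coord) ` A)} else {})"

definition Zset :: "(real ^ ('n::{finite,wellorder})) set \<Rightarrow> (real ^ ('n::{finite,wellorder})) set" where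
  "Zset A = Zinf A \<union> Zsup A"

text \<open>piW f S is the projection onto the x-coordinates of the set W_S (a subset of C^n).
For 2 <= |S| <= n-1 the projective point (mu_1 : ... : mu_s) is represented by a nonzero
vector mu indexed by S (projection = existence of such a mu).\<close>
definition piW :: "(nat \<Rightarrow> ('n::{finite,wellorder}) rpoly) \<Rightarrow> nat set \<Rightarrow> (complex ^ ('n::{finite,wellorder})) set" where
  "piW f S =
    (if card S = 1 then
       {z. \<forall>i\<in>S. peval (f i) z = 0 \<and> (\<forall>k. k \<noteq> first_coord \<longrightarrow> peval (pdiff k (f i)) z = 0)}
     else if 2 \<le> card S \<and> card S \<le> CARD('n::{finite,wellorder}) - 1 then
       {z. (\<forall>i\<in>S. peval (f i) z = 0) \<and>
           (\<exists>\<mu>::nat \<Rightarrow> complex. (\<exists>j\<in>S. \<mu> j \<noteq> 0) \<and>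
              (\<forall>k. k \<noteq> first_coord \<longrightarrow> (\<Sum>j\<in>S. \<mu> j * peval (pdiff k (f j)) z) = 0))}
     else
       {z. \<forall>i\<in>S. peval (f i) z = 0})"

definition cvec :: "real ^ 'n \<Rightarrow> complex ^ 'n" where
  "cvec x = (\<chi> i. complex_of_real (x $ i))"

end

theory Submission
  imports Defs
begin

text \<open>
  Let \<open>x \<in> Z(C)\<close>, so \<open>c * x\<^sub>1 \<le> c * y\<^sub>1\<close> on \<open>C\<close> for \<open>c = 1\<close> or \<open>c = -1\<close>, and let \<open>A\<close> be the set
  of constraints vanishing at \<open>x\<close>; it contains \<open>E\<^sub>\<sigma>\<close> because \<open>x\<close> lies in the closure of the
  semialgebraic set. If \<open>x \<notin> \<pi>\<^sub>x(W\<^sub>A)\<close>, the gradients of the \<open>f\<^sub>i\<close>, \<open>i \<in> A\<close>, with their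
  \<open>x\<^sub>1\<close>-component deleted are linearly independent (for \<open>|A| \<ge> n\<close> the point \<open>x\<close> even lies
  in \<open>W\<^sub>A\<close>). The inverse function theorem then yields a chart \<open>G\<close> around \<open>x\<close> that fixes
  \<open>x\<^sub>1\<close> and in which every active \<open>f\<^sub>i\<close> is a linear form not involving \<open>x\<^sub>1\<close>, while the
  inactive constraints keep their strict sign near \<open>x\<close>. So near \<open>x\<close> the set is, in this
  chart, a cylinder in the \<open>x\<^sub>1\<close>-direction, and sliding a point of \<open>C\<close> close to \<open>x\<close> along
  that direction stays in \<open>C\<close> and passes below \<open>c * x\<^sub>1\<close>.
\<close>

definition monom_eval :: "('n::finite \<Rightarrow> nat) \<Rightarrow> real^'n \<Rightarrow> real" where
  "monom_eval \<alpha> z = (\<Prod>i\<in>UNIV. (z $ i) ^ \<alpha> i)"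

definition monom_pdiff :: "'n::finite \<Rightarrow> ('n \<Rightarrow> nat) \<Rightarrow> real^'n \<Rightarrow> real" where
  "monom_pdiff k \<alpha> z = of_nat (\<alpha> k) * (z $ k) ^ (\<alpha> k - 1) * (\<Prod>j\<in>UNIV - {k}. (z $ j) ^ \<alpha> j)"

lemma has_derivative_monom_eval:
  fixes z :: "real^'n::finite"
  shows "(monom_eval \<alpha> has_derivative (\<lambda>h. \<Sum>k\<in>UNIV. h $ k * monom_pdiff k \<alpha> z)) (at z)"
proof -
  have "((\<lambda>x::real^'n. (x $ i) ^ \<alpha> i) has_derivative (\<lambda>h. of_nat (\<alpha> i) * h $ i * (z $ i) ^ (\<alpha> i - 1))) (at z)" for i
    by (intro has_derivative_power bounded_linear_imp_has_derivative bounded_linear_vec_nth)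
  from has_derivative_prod[of UNIV, OF this] show ?thesis
    unfolding monom_eval_def monom_pdiff_def by (simp add: mult_ac)
qed

lemma peval_real_eq: "peval p (z::real^'n::finite) = (\<Sum>\<alpha>\<in>{\<alpha>. p \<alpha> \<noteq> 0}. p \<alpha> * monom_eval \<alpha> z)"
  unfolding peval_def monom_eval_def by simp

lemma peval_cvec: "peval p (cvec x) = complex_of_real (peval p x)"
  unfolding peval_def cvec_def by (simp add: of_real_sum of_real_prod)

lemma inj_incr_exponent: "inj (\<lambda>\<alpha>::'n \<Rightarrow> nat. \<alpha>(k := \<alpha> k + 1))"
proof (rule injI, rule ext)
  fix a b :: "'n \<Rightarrow> nat" and j assume h: "a(k := a k + 1) = b(k := b k + 1)"
  show "a j = b j" using fun_cong[OF h, of j] fun_cong[OF h, of k] by (cases "j = k") auto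
qed

lemma is_rpoly_pdiff:
  assumes "is_rpoly p" shows "is_rpoly (pdiff k p)"
proof -
  have "{\<alpha>. pdiff k p \<alpha> \<noteq> 0} \<subseteq> (\<lambda>\<alpha>. \<alpha>(k := \<alpha> k + 1)) -` {\<alpha>. p \<alpha> \<noteq> 0}"
    by (auto simp: pdiff_def)
  moreover have "finite ((\<lambda>\<alpha>. \<alpha>(k := \<alpha> k + 1)) -` {\<alpha>. p \<alpha> \<noteq> 0})"
    using assms unfolding is_rpoly_def by (rule finite_vimageI[OF _ inj_incr_exponent])
  ultimately show ?thesis unfolding is_rpoly_def by (rule finite_subset)
qed

lemma peval_pdiff_real:
  assumes "is_rpoly p"
  shows "peval (pdiff k p) (z::real^'n::finite) = (\<Sum>\<alpha>\<in>{\<alpha>. p \<alpha> \<noteq> 0}. p \<alpha> * monom_pdiff k \<alpha> z)"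
proof -
  have fin: "finite {\<alpha>. p \<alpha> \<noteq> 0}" using assms by (simp add: is_rpoly_def)
  have "(\<Sum>\<alpha>\<in>{\<alpha>. p \<alpha> \<noteq> 0}. p \<alpha> * monom_pdiff k \<alpha> z)
      = (\<Sum>\<alpha>\<in>{\<alpha>. p \<alpha> \<noteq> 0 \<and> \<alpha> k \<noteq> 0}. p \<alpha> * monom_pdiff k \<alpha> z)"
    by (rule sum.mono_neutral_right) (use fin in \<open>auto simp: monom_pdiff_def\<close>)
  also have "\<dots> = (\<Sum>\<beta>\<in>{\<beta>. pdiff k p \<beta> \<noteq> 0}. pdiff k p \<beta> * monom_eval \<beta> z)"
  proof (rule sym, rule sum.reindex_bij_witness[where j="\<lambda>\<beta>. \<beta>(k := \<beta> k + 1)" and i="\<lambda>\<alpha>. \<alpha>(k := \<alpha> k - 1)"])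
    fix \<beta> assume "\<beta> \<in> {\<beta>. pdiff k p \<beta> \<noteq> 0}"
    then show "\<beta>(k := \<beta> k + 1) \<in> {\<alpha>. p \<alpha> \<noteq> 0 \<and> \<alpha> k \<noteq> 0}" by (simp add: pdiff_def)
    have "(\<Prod>j\<in>UNIV - {k}. (z $ j) ^ (\<beta>(k := \<beta> k + 1)) j) = (\<Prod>j\<in>UNIV - {k}. (z $ j) ^ \<beta> j)"
      by (rule prod.cong) auto
    moreover have "monom_eval \<beta> z = (z $ k) ^ \<beta> k * (\<Prod>j\<in>UNIV - {k}. (z $ j) ^ \<beta> j)"
      unfolding monom_eval_def by (simp add: prod.remove)
    ultimately show "p (\<beta>(k := \<beta> k + 1)) * monom_pdiff k (\<beta>(k := \<beta> k + 1)) z = pdiff k p \<beta> * monom_eval \<beta> z"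
      by (simp add: monom_pdiff_def pdiff_def mult_ac)
  qed (auto simp: pdiff_def)
  also have "\<dots> = peval (pdiff k p) z" by (simp add: peval_real_eq)
  finally show ?thesis by simp
qed

definition pgrad :: "('n::finite) rpoly \<Rightarrow> real^'n \<Rightarrow> real^'n" where
  "pgrad p z = (\<chi> k. peval (pdiff k p) z)"

lemma has_derivative_peval:
  assumes "is_rpoly p"
  shows "((\<lambda>z::real^'n::finite. peval p z) has_derivative (\<lambda>h. pgrad p z \<bullet> h)) (at z)"
proof -
  have "((\<lambda>z. \<Sum>\<alpha>\<in>{\<alpha>. p \<alpha> \<noteq> 0}. p \<alpha> * monom_eval \<alpha> z) has_derivative
      (\<lambda>h. \<Sum>\<alpha>\<in>{\<alpha>. p \<alpha> \<noteq> 0}. p \<alpha> * (\<Sum>k\<in>UNIV. h $ k * monom_pdiff k \<alpha> z))) (at z)"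
    by (intro has_derivative_sum has_derivative_mult_right has_derivative_monom_eval)
  moreover have "(\<Sum>\<alpha>\<in>{\<alpha>. p \<alpha> \<noteq> 0}. p \<alpha> * (\<Sum>k\<in>UNIV. h $ k * monom_pdiff k \<alpha> z))
      = (\<Sum>k\<in>UNIV. h $ k * peval (pdiff k p) z)" for h
    unfolding peval_pdiff_real[OF assms] sum_distrib_left
    by (subst sum.swap) (simp add: mult.left_commute)
  ultimately show ?thesis by (simp add: peval_real_eq pgrad_def inner_vec_def mult.commute)
qed

lemma continuous_on_peval:
  assumes "is_rpoly p" shows "continuous_on S (\<lambda>z::real^'n::finite. peval p z)"
  using has_derivative_continuous[OF has_derivative_peval[OF assms]]
  by (simp add: continuous_at_imp_continuous_on)

lemma continuous_on_pgrad:
  assumes "is_rpoly p" shows "continuous_on S (pgrad p)"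
  unfolding pgrad_def
  by (intro continuous_on_vec_lambda continuous_on_peval is_rpoly_pdiff assms)

lemma span_image_finite:
  fixes v :: "'i \<Rightarrow> 'a::real_vector"
  assumes "finite B"
  shows "span (v ` B) = range (\<lambda>u. \<Sum>j\<in>B. u j *\<^sub>R v j)"
proof
  have "subspace (range (\<lambda>u. \<Sum>j\<in>B. u j *\<^sub>R v j))"
  proof (rule subspaceI)
    show "0 \<in> range (\<lambda>u. \<Sum>j\<in>B. u j *\<^sub>R v j)"
      by (rule range_eqI[of _ _ "\<lambda>_. 0"]) simp
  next
    fix x y assume "x \<in> range (\<lambda>u. \<Sum>j\<in>B. u j *\<^sub>R v j)" "y \<in> range (\<lambda>u. \<Sum>j\<in>B. u j *\<^sub>R v j)"
    then obtain u u' where "x = (\<Sum>j\<in>B. u j *\<^sub>R v j)" "y = (\<Sum>j\<in>B. u' j *\<^sub>R v j)" by blast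
    then show "x + y \<in> range (\<lambda>u. \<Sum>j\<in>B. u j *\<^sub>R v j)"
      by (intro range_eqI[of _ _ "\<lambda>j. u j + u' j"]) (simp add: scaleR_add_left sum.distrib)
  next
    fix c x assume "x \<in> range (\<lambda>u. \<Sum>j\<in>B. u j *\<^sub>R v j)"
    then obtain u where "x = (\<Sum>j\<in>B. u j *\<^sub>R v j)" by blast
    then show "c *\<^sub>R x \<in> range (\<lambda>u. \<Sum>j\<in>B. u j *\<^sub>R v j)"
      by (intro range_eqI[of _ _ "\<lambda>j. c * u j"]) (simp add: scaleR_sum_right)
  qed
  moreover have "v ` B \<subseteq> range (\<lambda>u. \<Sum>j\<in>B. u j *\<^sub>R v j)"
  proof
    fix x assume "x \<in> v ` B"
    then obtain i where "i \<in> B" "x = v i" by blast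
    then show "x \<in> range (\<lambda>u. \<Sum>j\<in>B. u j *\<^sub>R v j)"
      using assms by (intro range_eqI[of _ _ "\<lambda>j. if j = i then 1 else 0"]) (simp add: if_distrib[of "\<lambda>c. c *\<^sub>R _"] cong: if_cong)
  qed
  ultimately show "span (v ` B) \<subseteq> range (\<lambda>u. \<Sum>j\<in>B. u j *\<^sub>R v j)"
    by (rule span_minimal[rotated])
  show "range (\<lambda>u. \<Sum>j\<in>B. u j *\<^sub>R v j) \<subseteq> span (v ` B)"
  proof
    fix x assume "x \<in> range (\<lambda>u. \<Sum>j\<in>B. u j *\<^sub>R v j)"
    then obtain u where "x = (\<Sum>j\<in>B. u j *\<^sub>R v j)" by blast
    then show "x \<in> span (v ` B)"
      by (simp add: span_sum span_scale span_base)
  qed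
qed

lemma dual_vector_exists:
  fixes v :: "'i \<Rightarrow> 'a::euclidean_space"
  assumes fin: "finite A" and indep: "\<And>\<mu>. (\<Sum>j\<in>A. \<mu> j *\<^sub>R v j) = 0 \<Longrightarrow> \<forall>j\<in>A. \<mu> j = 0"
    and W: "subspace W" "v ` A \<subseteq> W" and i: "i \<in> A"
  obtains b where "b \<in> W" "\<And>j. j \<in> A \<Longrightarrow> v j \<bullet> b = (if i = j then 1 else 0)"
proof -
  obtain y z where y: "y \<in> span (v ` (A - {i}))"
    and z: "\<And>w. w \<in> span (v ` (A - {i})) \<Longrightarrow> orthogonal z w" and vi: "v i = y + z"
    using orthogonal_subspace_decomp_exists by blast
  have "z \<noteq> 0"
  proof
    assume "z = 0"
    then obtain u where u: "v i = (\<Sum>j\<in>A - {i}. u j *\<^sub>R v j)"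
      using y vi span_image_finite[of "A - {i}" v] fin by auto
    have "(\<Sum>j\<in>A. (if j = i then 1 else - u j) *\<^sub>R v j) = v i - (\<Sum>j\<in>A - {i}. u j *\<^sub>R v j)"
      using fin i by (simp add: sum.remove sum_negf)
    then show False using indep[of "\<lambda>j. if j = i then 1 else - u j"] u i by auto
  qed
  have orth: "v j \<bullet> z = 0" if "j \<in> A" "j \<noteq> i" for j
    using z[of "v j"] that by (simp add: span_base orthogonal_def inner_commute)
  have "v i \<bullet> z = z \<bullet> z"
    using z[OF y] vi by (simp add: orthogonal_def inner_add_left inner_add_right inner_commute)
  moreover have "z \<in> W"
  proof -
    have "y \<in> W" using y W span_minimal[of "v ` (A - {i})" W] by blast
    then show ?thesis using vi W i subspace_diff[of W "v i" y] by auto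
  qed
  ultimately show ?thesis
    using \<open>z \<noteq> 0\<close> orth W(1) by (intro that[of "inverse (z \<bullet> z) *\<^sub>R z"]) (auto simp: subspace_scale)
qed

lemma dual_family_exists:
  fixes v :: "'i \<Rightarrow> 'a::euclidean_space"
  assumes "finite A" and "\<And>\<mu>. (\<Sum>j\<in>A. \<mu> j *\<^sub>R v j) = 0 \<Longrightarrow> \<forall>j\<in>A. \<mu> j = 0"
    and "subspace W" "v ` A \<subseteq> W"
  obtains b where "\<And>i. i \<in> A \<Longrightarrow> b i \<in> W"
    and "\<And>i j. i \<in> A \<Longrightarrow> j \<in> A \<Longrightarrow> v j \<bullet> b i = (if i = j then 1 else 0)"
proof -
  have "\<forall>i\<in>A. \<exists>b. b \<in> W \<and> (\<forall>j\<in>A. v j \<bullet> b = (if i = j then 1 else 0))"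
    using dual_vector_exists[OF assms] by metis
  then show ?thesis using that by metis
qed

lemma inverse_function_theorem_pointwise:
  fixes G :: "'a::euclidean_space \<Rightarrow> 'a"
  assumes deriv: "\<And>z. (G has_derivative D z) (at z)"
    and cont: "\<And>h. continuous_on UNIV (\<lambda>z. D z h)"
    and L: "linear L" "\<And>h. L (D x h) = h"
  obtains U V g where "open U" "x \<in> U" "open V" "homeomorphism U V G g"
proof -
  have bl: "bounded_linear (D z)" for z using deriv has_derivative_bounded_linear by blast
  have apply_D: "blinfun_apply (Blinfun (D z)) = D z" for z
    using bl by (rule bounded_linear_Blinfun_apply)
  have deriv': "(G has_derivative blinfun_apply (Blinfun (D z))) (at z)" if "z \<in> UNIV" for z
    by (simp add: apply_D deriv)
  have cont': "continuous_on UNIV (\<lambda>z. Blinfun (D z))"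
    by (rule continuous_on_blinfun_componentwise) (simp add: apply_D cont)
  have "bounded_linear L" using L(1) by (simp add: linear_conv_bounded_linear)
  then have inv: "Blinfun L o\<^sub>L Blinfun (D x) = id_blinfun"
    by (intro blinfun_eqI) (simp add: apply_D bounded_linear_Blinfun_apply L(2))
  show thesis
    by (rule inverse_function_theorem[OF open_UNIV deriv' cont' UNIV_I inv]) (auto intro: that)
qed

lemma straightening_chart_of_dual_family:
  fixes F :: "'i \<Rightarrow> real^'n::finite \<Rightarrow> real" and grad :: "'i \<Rightarrow> real^'n \<Rightarrow> real^'n"
    and v b :: "'i \<Rightarrow> real^'n"
  assumes fin: "finite A"
    and deriv: "\<forall>j\<in>A. \<forall>z. (F j has_derivative (\<lambda>h. grad j z \<bullet> h)) (at z)"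
    and cont: "\<forall>j\<in>A. continuous_on UNIV (grad j)"
    and v_tangential: "\<forall>j\<in>A. v j = grad j x - (grad j x $ e) *\<^sub>R axis e 1"
    and b_e: "\<forall>i\<in>A. b i $ e = 0"
    and dual: "\<forall>i\<in>A. \<forall>j\<in>A. v j \<bullet> b i = (if i = j then 1 else 0)"
  obtains U V G g where "homeomorphism U V G g" "open U" "x \<in> U" "open V"
    and "\<And>z. G z $ e = z $ e"
    and "\<And>j z. j \<in> A \<Longrightarrow> F j z = v j \<bullet> G z"
proof -
  \<comment> \<open>The correction lies in the span of the \<open>b i\<close>, inside the hyperplane \<open>h $ e = 0\<close>, so
    \<open>G\<close> fixes coordinate \<open>e\<close>; by duality \<open>v j \<bullet> G z = F j z\<close>. At \<open>x\<close> the derivative is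
    \<open>h + h $ e *\<^sub>R u\<close> with \<open>u $ e = 0\<close>, which \<open>h - h $ e *\<^sub>R u\<close> inverts.\<close>
  define G where "G z = z + (\<Sum>i\<in>A. (F i z - v i \<bullet> z) *\<^sub>R b i)" for z
  define D where "D z h = h + (\<Sum>i\<in>A. (grad i z \<bullet> h - v i \<bullet> h) *\<^sub>R b i)" for z h
  define u where "u = (\<Sum>i\<in>A. (grad i x $ e) *\<^sub>R b i)"
  have deriv_G: "(G has_derivative D z) (at z)" for z
    unfolding G_def D_def
    by (intro has_derivative_add has_derivative_ident has_derivative_sum has_derivative_scaleR_left
        has_derivative_diff deriv[rule_format] bounded_linear_imp_has_derivative bounded_linear_inner_right)
  have cont_D: "continuous_on UNIV (\<lambda>z. D z h)" for h
    unfolding D_def using cont by (auto intro!: continuous_intros)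
  have "grad i x \<bullet> h - v i \<bullet> h = grad i x $ e * h $ e" if "i \<in> A" for i h
    using v_tangential that by (simp add: inner_diff_left inner_commute[of "axis e 1"] inner_axis)
  then have "D x h = h + h $ e *\<^sub>R u" for h
    by (simp add: D_def u_def scaleR_sum_right mult.commute cong: sum.cong)
  then have inv: "(\<lambda>h. h - h $ e *\<^sub>R u) (D x h) = h" for h
    using b_e by (simp add: u_def)
  have lin: "linear (\<lambda>h::real^'n. h - h $ e *\<^sub>R u)"
    by (intro linear_compose_sub linear_id bounded_linear.linear bounded_linear_ident
        bounded_linear_compose[OF bounded_linear_scaleR_left bounded_linear_vec_nth])
  obtain g U V where "homeomorphism U V G g" "open U" "x \<in> U" "open V"
    using inverse_function_theorem_pointwise[of G D, OF deriv_G cont_D lin inv] by blast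
  moreover have "G z $ e = z $ e" for z
    using b_e by (simp add: G_def)
  moreover have "F j z = v j \<bullet> G z" if "j \<in> A" for j z
  proof -
    have "v j \<bullet> G z = v j \<bullet> z + (\<Sum>i\<in>A. (F i z - v i \<bullet> z) * (if i = j then 1 else 0))"
      using dual that by (simp add: G_def inner_add_right inner_sum_right cong: sum.cong)
    then show ?thesis using fin that by (simp add: if_distrib[of "\<lambda>c. _ * c"] cong: if_cong)
  qed
  ultimately show ?thesis using that by blast
qed

lemma straightening_chart:
  fixes F :: "'i \<Rightarrow> real^'n::finite \<Rightarrow> real" and grad :: "'i \<Rightarrow> real^'n \<Rightarrow> real^'n"
  assumes fin: "finite A"
    and deriv: "\<forall>j\<in>A. \<forall>z. (F j has_derivative (\<lambda>h. grad j z \<bullet> h)) (at z)"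
    and cont: "\<forall>j\<in>A. continuous_on UNIV (grad j)"
    and indep: "\<forall>\<mu>. (\<forall>k. k \<noteq> e \<longrightarrow> (\<Sum>j\<in>A. \<mu> j * grad j x $ k) = 0) \<longrightarrow> (\<forall>j\<in>A. \<mu> j = 0)"
  obtains U V G g where "homeomorphism U V G g" "open U" "x \<in> U" "open V"
    and "\<And>z. G z $ e = z $ e"
    and "\<And>j. j \<in> A \<Longrightarrow> \<exists>c. c $ e = 0 \<and> (\<forall>z. F j z = c \<bullet> G z)"
proof -
  define v where "v j = grad j x - (grad j x $ e) *\<^sub>R axis e 1" for j
  have v_e: "v j $ e = 0" for j by (simp add: v_def)
  have "\<forall>j\<in>A. \<mu> j = 0" if sum0: "(\<Sum>j\<in>A. \<mu> j *\<^sub>R v j) = 0" for \<mu>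
  proof -
    have "(\<Sum>j\<in>A. \<mu> j * grad j x $ k) = 0" if "k \<noteq> e" for k
      using arg_cong[OF sum0, of "\<lambda>w. w $ k"] that by (simp add: v_def axis_def)
    then show ?thesis using indep by blast
  qed
  moreover have "subspace {h::real^'n. h $ e = 0}" by (rule subspaceI) auto
  moreover have "v ` A \<subseteq> {h. h $ e = 0}" using v_e by auto
  ultimately obtain b where b_e: "\<And>i. i \<in> A \<Longrightarrow> b i \<in> {h. h $ e = 0}"
    and dual: "\<And>i j. i \<in> A \<Longrightarrow> j \<in> A \<Longrightarrow> v j \<bullet> b i = (if i = j then 1 else 0)"
    using dual_family_exists[OF fin] by blast
  have "\<forall>j\<in>A. v j = grad j x - (grad j x $ e) *\<^sub>R axis e 1" by (simp add: v_def)
  moreover have "\<forall>i\<in>A. b i $ e = 0" using b_e by simp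
  moreover have "\<forall>i\<in>A. \<forall>j\<in>A. v j \<bullet> b i = (if i = j then 1 else 0)" using dual by simp
  ultimately show thesis
  proof (rule straightening_chart_of_dual_family[OF fin deriv cont])
    fix U V G g
    assume chart: "homeomorphism U V G g" "open U" "x \<in> U" "open V"
      and G_e: "\<And>z. G z $ e = z $ e" and F_eq: "\<And>j z. j \<in> A \<Longrightarrow> F j z = v j \<bullet> G z"
    have "\<exists>c. c $ e = 0 \<and> (\<forall>z. F j z = c \<bullet> G z)" if "j \<in> A" for j
      using that v_e F_eq by blast
    with chart G_e show thesis by (rule that)
  qed
qed

lemma chart_segment_in_component:
  fixes G g :: "real^'n::finite \<Rightarrow> real^'n"
  assumes C: "C \<in> components T" and y: "y \<in> C" "y \<in> U"
    and hom: "homeomorphism U V G g" and "0 \<le> a"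
    and segment: "\<And>t. t \<in> {0..a} \<Longrightarrow> G y - (t * s) *\<^sub>R axis e 1 \<in> V \<inter> g -` Q"
    and cylinder: "\<And>y z. y \<in> T \<Longrightarrow> z \<in> Q \<inter> U \<Longrightarrow> (\<forall>k. k \<noteq> e \<longrightarrow> G z $ k = G y $ k) \<Longrightarrow> z \<in> T"
  shows "g (G y - (a * s) *\<^sub>R axis e 1) \<in> C"
proof -
  have gG: "\<And>z. z \<in> U \<Longrightarrow> g (G z) = z" and Gg: "\<And>w. w \<in> V \<Longrightarrow> G (g w) = w"
    and gV: "g ` V = U" and contg: "continuous_on V g"
    using hom by (auto simp: homeomorphism_def)
  define w where "w t = G y - (t * s) *\<^sub>R axis e 1" for t
  define P where "P = g ` w ` {0..a}"
  have "w ` {0..a} \<subseteq> V" using segment by (auto simp: w_def)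
  then have "connected P" unfolding P_def
    by (intro connected_continuous_image connected_Icc continuous_on_subset[OF contg])
       (auto simp: w_def intro!: continuous_intros)
  moreover have "y \<in> P"
  proof -
    have "y = g (w 0)" using gG[OF y(2)] by (simp add: w_def)
    then show ?thesis using \<open>0 \<le> a\<close> unfolding P_def by auto
  qed
  moreover have "P \<subseteq> T"
  proof
    fix z assume "z \<in> P"
    then obtain t where t: "t \<in> {0..a}" and z: "z = g (w t)" unfolding P_def by blast
    have "w t \<in> V" "z \<in> Q" using segment[OF t] z by (auto simp: w_def)
    moreover have "z \<in> U" using \<open>w t \<in> V\<close> gV z by blast
    moreover have "G z = w t" using Gg[OF \<open>w t \<in> V\<close>] z by simp
    moreover have "y \<in> T" using C y(1) in_components_subset by blast
    ultimately show "z \<in> T" using cylinder[of y z] by (auto simp: w_def axis_def)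
  qed
  moreover have "C = connected_component_set T y"
    using C y(1) by (metis components_iff connected_component_eq)
  ultimately have "P \<subseteq> C" by (simp add: connected_component_maximal)
  moreover have "g (w a) \<in> P" using \<open>0 \<le> a\<close> unfolding P_def by (intro imageI) simp
  ultimately show ?thesis unfolding w_def by blast
qed

lemma component_not_extremal_in_cylinder_chart:
  fixes G g :: "real^'n::finite \<Rightarrow> real^'n"
  assumes C: "C \<in> components T" and x: "x \<in> closure C"
    and hom: "homeomorphism U V G g" and U: "open U" "x \<in> U" and V: "open V"
    and G_e: "\<And>z. G z $ e = z $ e"
    and Q: "open Q" "x \<in> Q"
    and cylinder: "\<And>y z. y \<in> T \<Longrightarrow> z \<in> Q \<inter> U \<Longrightarrow> (\<forall>k. k \<noteq> e \<longrightarrow> G z $ k = G y $ k) \<Longrightarrow> z \<in> T"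
    and "c \<noteq> 0"
  shows "\<exists>z\<in>C. c * z $ e < c * x $ e"
proof -
  have gG: "\<And>z. z \<in> U \<Longrightarrow> g (G z) = z" and Gg: "\<And>w. w \<in> V \<Longrightarrow> G (g w) = w"
    and GU: "G ` U = V" and contG: "continuous_on U G" and contg: "continuous_on V g"
    using hom by (auto simp: homeomorphism_def)
  have "open (V \<inter> g -` Q)" using continuous_open_preimage[OF contg V Q(1)] .
  moreover have "G x \<in> V \<inter> g -` Q" using U(2) GU gG Q(2) by auto
  ultimately obtain r where r: "r > 0" "ball (G x) r \<subseteq> V \<inter> g -` Q"
    using open_contains_ball by blast
  have "open (U \<inter> G -` ball (G x) (r/2))" using continuous_open_preimage[OF contG U(1)] by simp
  moreover have "x \<in> U \<inter> G -` ball (G x) (r/2)" using U(2) r(1) by simp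
  ultimately have "U \<inter> G -` ball (G x) (r/2) \<inter> C \<noteq> {}"
    using x open_Int_closure_eq_empty by blast
  then obtain y where y: "y \<in> C" "y \<in> U" and y_near: "dist (G x) (G y) < r/2" by auto
  have segment: "G y - (t * sgn c) *\<^sub>R axis e 1 \<in> ball (G x) r" if "t \<in> {0..r/2}" for t
  proof -
    let ?w = "G y - (t * sgn c) *\<^sub>R axis e 1"
    have "dist (G y) ?w \<le> r/2" using that \<open>c \<noteq> 0\<close> by (simp add: dist_norm abs_mult)
    then show ?thesis using y_near dist_triangle[of "G x" ?w "G y"] by simp
  qed
  have "g (G y - (r/2 * sgn c) *\<^sub>R axis e 1) \<in> C" (is "?z \<in> C")
  proof (rule chart_segment_in_component[OF C y hom])
    show "G y - (t * sgn c) *\<^sub>R axis e 1 \<in> V \<inter> g -` Q" if "t \<in> {0..r/2}" for t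
      using segment[OF that] r(2) by blast
  qed (use r cylinder in auto)
  have "G ?z = G y - (r/2 * sgn c) *\<^sub>R axis e 1"
    using Gg segment[of "r/2"] r by auto
  then have "y $ e = ?z $ e + r/2 * sgn c" using G_e[of ?z] G_e[of y] by simp
  then have "c * y $ e = c * ?z $ e + r/2 * (c * sgn c)" by (simp add: algebra_simps)
  then have z_e: "c * ?z $ e = c * y $ e - r/2 * \<bar>c\<bar>" by (simp add: abs_sgn)
  have "\<bar>y $ e - x $ e\<bar> < r/2"
    using component_le_norm_cart[of "G y - G x" e] y_near G_e[of x] G_e[of y]
    by (simp add: dist_norm norm_minus_commute)
  then have "\<bar>c\<bar> * \<bar>y $ e - x $ e\<bar> < \<bar>c\<bar> * (r/2)"
    using \<open>c \<noteq> 0\<close> by (intro mult_strict_left_mono) auto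
  moreover have "c * (y $ e - x $ e) \<le> \<bar>c\<bar> * \<bar>y $ e - x $ e\<bar>"
    by (metis abs_ge_self abs_mult)
  ultimately have "c * (y $ e - x $ e) < \<bar>c\<bar> * (r/2)" by linarith
  then have "c * ?z $ e < c * x $ e" using z_e by (simp add: algebra_simps)
  then show ?thesis using \<open>?z \<in> C\<close> by blast
qed

fun sat_weak :: "rel \<Rightarrow> real \<Rightarrow> bool" where
  "sat_weak Le v = (v \<le> 0)"
| "sat_weak Lt v = (v \<le> 0)"
| "sat_weak Eq v = (v = 0)"
| "sat_weak Gt v = (v \<ge> 0)"
| "sat_weak Ge v = (v \<ge> 0)"

lemma sat_imp_sat_weak: "sat r v \<Longrightarrow> sat_weak r v"
  by (cases r) auto

lemma sat_weak_imp_sat_same_sign: "sat_weak r v \<Longrightarrow> 0 < w * v \<Longrightarrow> sat r w"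
  by (cases r) (auto simp: zero_less_mult_iff)

lemma closed_sat_weak:
  assumes "continuous_on UNIV (P :: 'a::topological_space \<Rightarrow> real)"
  shows "closed {z. sat_weak r (P z)}"
  using assms by (cases r) (auto intro!: closed_Collect_le closed_Collect_eq continuous_on_const)

lemma closure_semialg_subset:
  assumes "\<forall>i\<in>{1..m}. is_rpoly (f i)"
  shows "closure (semialg f \<sigma> m) \<subseteq> {z. \<forall>i\<in>{1..m}. sat_weak (\<sigma> i) (peval (f i) z)}"
proof (rule closure_minimal)
  show "semialg f \<sigma> m \<subseteq> {z. \<forall>i\<in>{1..m}. sat_weak (\<sigma> i) (peval (f i) z)}"
    by (auto simp: semialg_def sat_imp_sat_weak)
  have "{z. \<forall>i\<in>{1..m}. sat_weak (\<sigma> i) (peval (f i) z)} = (\<Inter>i\<in>{1..m}. {z. sat_weak (\<sigma> i) (peval (f i) z)})"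
    by auto
  then show "closed {z. \<forall>i\<in>{1..m}. sat_weak (\<sigma> i) (peval (f i) z)}"
    using assms by (auto intro!: closed_INT closed_sat_weak continuous_on_peval)
qed

definition active :: "(nat \<Rightarrow> ('n::finite) rpoly) \<Rightarrow> nat \<Rightarrow> real^'n \<Rightarrow> nat set" where
  "active f m x = {i\<in>{1..m}. peval (f i) x = 0}"

definition same_sign :: "(nat \<Rightarrow> ('n::finite) rpoly) \<Rightarrow> nat \<Rightarrow> real^'n \<Rightarrow> (real^'n) set" where
  "same_sign f m x = {z. \<forall>i\<in>{1..m} - active f m x. 0 < peval (f i) z * peval (f i) x}"

lemma open_same_sign:
  assumes "\<forall>i\<in>{1..m}. is_rpoly (f i)" shows "open (same_sign f m x)"
proof -
  have "same_sign f m x = (\<Inter>i\<in>{1..m} - active f m x. {z. 0 < peval (f i) z * peval (f i) x})"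
    by (auto simp: same_sign_def)
  then show ?thesis
    using assms by (auto intro!: open_INT open_Collect_less continuous_intros continuous_on_peval)
qed

lemma mem_same_sign: "x \<in> same_sign f m x"
  by (auto simp: same_sign_def active_def zero_less_mult_iff linorder_neq_iff)

lemma semialg_cylinder:
  fixes G :: "real^'n::finite \<Rightarrow> real^'n"
  assumes x: "x \<in> closure (semialg f \<sigma> m)" and polys: "\<forall>i\<in>{1..m}. is_rpoly (f i)"
    and level: "\<And>j. j \<in> active f m x \<Longrightarrow> \<exists>c. c $ e = 0 \<and> (\<forall>z. peval (f j) z = c \<bullet> G z)"
    and y: "y \<in> semialg f \<sigma> m" and z: "z \<in> same_sign f m x"
    and Gzy: "\<forall>k. k \<noteq> e \<longrightarrow> G z $ k = G y $ k"
  shows "z \<in> semialg f \<sigma> m"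
  unfolding semialg_def
proof (intro CollectI ballI)
  fix i assume i: "i \<in> {1..m}"
  show "sat (\<sigma> i) (peval (f i) z)"
  proof (cases "i \<in> active f m x")
    case True
    then obtain c where "c $ e = 0" and c: "\<And>z. peval (f i) z = c \<bullet> G z" using level by blast
    have ck: "c $ k * G z $ k = c $ k * G y $ k" for k
      using Gzy \<open>c $ e = 0\<close> by (cases "k = e") auto
    have "c \<bullet> G z = c \<bullet> G y" unfolding inner_vec_def inner_real_def by (simp only: ck)
    then have "peval (f i) z = peval (f i) y" by (simp only: c)
    with y i show ?thesis by (simp add: semialg_def)
  next
    case False
    have "sat_weak (\<sigma> i) (peval (f i) x)" using x i closure_semialg_subset[OF polys] by blast
    moreover have "0 < peval (f i) z * peval (f i) x" using z i False by (simp add: same_sign_def)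
    ultimately show ?thesis by (rule sat_weak_imp_sat_same_sign)
  qed
qed

lemma cvec_mem_piW_if_dependent:
  assumes zeros: "\<forall>i\<in>S. peval (f i) x = 0"
    and dep: "(\<exists>j\<in>S. \<mu> j \<noteq> 0) \<and> (\<forall>k. k \<noteq> first_coord \<longrightarrow> (\<Sum>j\<in>S. \<mu> j * peval (pdiff k (f j)) x) = 0)"
  shows "cvec x \<in> piW f S"
proof -
  have zeros_c: "\<forall>i\<in>S. peval (f i) (cvec x) = 0" using zeros by (simp add: peval_cvec)
  consider "card S = 1" | "card S \<noteq> 1" "2 \<le> card S \<and> card S \<le> CARD('a) - 1"
    | "card S \<noteq> 1" "\<not> (2 \<le> card S \<and> card S \<le> CARD('a) - 1)" by blast
  then show ?thesis
  proof cases
    case 1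
    then obtain a where S: "S = {a}" by (rule card_1_singletonE)
    with dep have "\<forall>k. k \<noteq> first_coord \<longrightarrow> peval (pdiff k (f a)) (cvec x) = 0"
      by (auto simp: peval_cvec)
    then show ?thesis using zeros_c unfolding piW_def if_P[OF 1] S by simp
  next
    case 2
    have cor_sum: "(\<Sum>j\<in>S. complex_of_real (\<mu> j) * peval (pdiff k (f j)) (cvec x))
        = complex_of_real (\<Sum>j\<in>S. \<mu> j * peval (pdiff k (f j)) x)" for k
      by (simp add: peval_cvec)
    have "\<forall>k. k \<noteq> first_coord \<longrightarrow> (\<Sum>j\<in>S. complex_of_real (\<mu> j) * peval (pdiff k (f j)) (cvec x)) = 0"
    proof (intro allI impI)
      fix k :: 'a assume "k \<noteq> first_coord"
      with dep have "(\<Sum>j\<in>S. \<mu> j * peval (pdiff k (f j)) x) = 0" by blast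
      then show "(\<Sum>j\<in>S. complex_of_real (\<mu> j) * peval (pdiff k (f j)) (cvec x)) = 0"
        by (simp only: cor_sum of_real_0)
    qed
    moreover have "\<exists>j\<in>S. complex_of_real (\<mu> j) \<noteq> 0" using dep by simp
    ultimately have "\<exists>\<nu>. (\<exists>j\<in>S. \<nu> j \<noteq> 0) \<and>
        (\<forall>k. k \<noteq> first_coord \<longrightarrow> (\<Sum>j\<in>S. \<nu> j * peval (pdiff k (f j)) (cvec x)) = 0)"
      by (intro exI[of _ "\<lambda>j. complex_of_real (\<mu> j)"] conjI)
    then show ?thesis using zeros_c unfolding piW_def if_not_P[OF 2(1)] if_P[OF 2(2)] by simp
  next
    case 3
    then show ?thesis using zeros_c unfolding piW_def if_not_P[OF 3(1)] if_not_P[OF 3(2)] by simp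
  qed
qed

lemma active_gradients_independent:
  assumes x: "x \<in> closure (semialg f \<sigma> m)" and polys: "\<forall>i\<in>{1..m}. is_rpoly (f i)"
    and x_notin: "x \<notin> (\<Union>S\<in>{S. Eset \<sigma> m \<subseteq> S \<and> S \<subseteq> {1..m} \<and> S \<noteq> {}}. {x. cvec x \<in> piW f S})"
  shows "\<forall>\<mu>. (\<forall>k. k \<noteq> first_coord \<longrightarrow> (\<Sum>j\<in>active f m x. \<mu> j * pgrad (f j) x $ k) = 0)
    \<longrightarrow> (\<forall>j\<in>active f m x. \<mu> j = 0)"
proof (intro allI impI, rule ccontr)
  fix \<mu> :: "nat \<Rightarrow> real"
  assume "\<forall>k. k \<noteq> first_coord \<longrightarrow> (\<Sum>j\<in>active f m x. \<mu> j * pgrad (f j) x $ k) = 0"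
    and nonzero: "\<not> (\<forall>j\<in>active f m x. \<mu> j = 0)"
  then have "cvec x \<in> piW f (active f m x)"
    by (intro cvec_mem_piW_if_dependent) (auto simp: active_def pgrad_def)
  moreover have "Eset \<sigma> m \<subseteq> active f m x"
    using x closure_semialg_subset[OF polys] by (force simp: Eset_def active_def)
  moreover have "active f m x \<noteq> {}" "active f m x \<subseteq> {1..m}"
    using nonzero by (auto simp: active_def)
  ultimately show False using x_notin by blast
qed

lemma Zset_imp_extremal:
  assumes "x \<in> Zset C"
  obtains c :: real where "c \<noteq> 0" "x \<in> closure C"
    "\<And>y. y \<in> C \<Longrightarrow> c * x $ first_coord \<le> c * y $ first_coord"
proof -
  let ?X = "(\<lambda>y. y $ first_coord) ` C"
  from assms consider "x \<in> closure C" "bdd_below ?X" "x $ first_coord = Inf ?X"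
    | "x \<in> closure C" "bdd_above ?X" "x $ first_coord = Sup ?X"
    unfolding Zset_def Zinf_def Zsup_def by (auto split: if_splits)
  then show thesis
  proof cases
    case 1
    then show thesis using that[of 1] cInf_lower[OF _ \<open>bdd_below ?X\<close>] by auto
  next
    case 2
    then show thesis using that[of "-1"] cSup_upper[OF _ \<open>bdd_above ?X\<close>] by auto
  qed
qed

theorem mainTheorem8:
  fixes f :: "nat \<Rightarrow> ('n::{finite,wellorder}) rpoly" and \<sigma> :: "nat \<Rightarrow> rel" and m :: nat
    and C :: "(real ^ ('n::{finite,wellorder})) set"
  assumes "\<forall>i\<in>{1..m}. is_rpoly (f i)"
    and "C \<in> components (semialg f \<sigma> m)"
  shows "Zset C \<subseteq> (\<Union>S\<in>{S. Eset \<sigma> m \<subseteq> S \<and> S \<subseteq> {1..m} \<and> S \<noteq> {}}. {x. cvec x \<in> piW f S})"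
proof (rule subsetI, rule ccontr)
  note polys = assms(1) and C = assms(2)
  fix x assume "x \<in> Zset C"
  then obtain c :: real where "c \<noteq> 0" and x: "x \<in> closure C"
    and extremal: "\<And>y. y \<in> C \<Longrightarrow> c * x $ first_coord \<le> c * y $ first_coord"
    by (rule Zset_imp_extremal) blast
  have x_semialg: "x \<in> closure (semialg f \<sigma> m)"
    using x closure_mono[OF in_components_subset[OF C]] by blast
  assume "x \<notin> (\<Union>S\<in>{S. Eset \<sigma> m \<subseteq> S \<and> S \<subseteq> {1..m} \<and> S \<noteq> {}}. {x. cvec x \<in> piW f S})"
  note indep = active_gradients_independent[OF x_semialg polys this]
  have "finite (active f m x)" by (simp add: active_def)
  moreover have "\<forall>j\<in>active f m x. \<forall>z. (peval (f j) has_derivative (\<lambda>h. pgrad (f j) z \<bullet> h)) (at z)"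
    using polys by (simp add: active_def has_derivative_peval)
  moreover have "\<forall>j\<in>active f m x. continuous_on UNIV (pgrad (f j))"
    using polys by (simp add: active_def continuous_on_pgrad)
  ultimately show False
  proof (rule straightening_chart[of _ "\<lambda>j. peval (f j)" "\<lambda>j. pgrad (f j)", OF _ _ _ indep])
    fix U V :: "(real, 'n) vec set" and G g :: "(real, 'n) vec \<Rightarrow> (real, 'n) vec"
    assume chart: "homeomorphism U V G g" "open U" "x \<in> U" "open V"
      and G_e: "\<And>z. G z $ first_coord = z $ first_coord"
      and level: "\<And>j. j \<in> active f m x \<Longrightarrow> \<exists>c. c $ first_coord = 0 \<and> (\<forall>z. peval (f j) z = c \<bullet> G z)"
    have "\<exists>z\<in>C. c * z $ first_coord < c * x $ first_coord"
      using semialg_cylinder[OF x_semialg polys level]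
      by (intro component_not_extremal_in_cylinder_chart[OF C x chart G_e open_same_sign[OF polys]
          mem_same_sign _ \<open>c \<noteq> 0\<close>]) blast
    then show False using extremal by (auto simp: not_less[symmetric])
  qed
qed

end
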